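(* Let $F$ be an ordered field, let $\mathcal{U}$ be a free ultrafilter on $\mathbb{N}$, and let ${}^\ast F=F^{\mathbb{N}}/\mathcal{U}$ be the ultrapower. Let $\langle u_n\rangle_{n\in\mathbb{N}}$ be a sequence in $F$ and let $u\in{}^\ast F$ be its equivalence class. Consider the partition $\mathbb{N}=A\sqcup B\sqcup C$ where $A=\{n\in\mathbb{N}: u_n<u\}$, $B=\{n\in\mathbb{N}: u_n=u\}$, $C=\{n\in\mathbb{N}: u_n>u\}$ (here $u_n\in F$ is regarded as an element of ${}^\ast F$). Then exactly one of the following three possibilities occurs: (1) $B\in\mathcal{U}$, and then $\langle u_n\rangle$ contains an infinite constant subsequence; (2) $A\in\mathcal{U}$, and then $\langle u_n\rangle$ contains an infinite strictly increasing subsequence; (3) $C\in\mathcal{U}$, and then $\langle u_n\rangle$ contains an infinite strictly decreasing subsequence.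
   Context: A free ultrafilter $\mathcal{U}$ on $\mathbb{N}$ is an ultrafilter on $\mathbb{N}$ containing every cofinite subset of $\mathbb{N}$. The ultrapower ${}^\ast F=F^{\mathbb{N}}/\mathcal{U}$ is the set of equivalence classes $[\langle v_n\rangle]$ of sequences in $F$, where two sequences are equivalent iff $\{n: v_n=w_n\}\in\mathcal{U}$. It is ordered by $[\langle v_n\rangle]<[\langle w_n\rangle]$ iff $\{n\in\mathbb{N}: v_n<w_n\}\in\mathcal{U}$. Each $x\in F$ is identified with the class $[\langle x\rangle]$ of the constant sequence with value $x$; thus for $x\in F$, $x<[\langle w_n\rangle]$ iff $\{n: x<w_n\}\in\mathcal{U}$, and similarly for $=$ and $>$. *)

theory Defs
  imports Main
begin

definition free_ultrafilter :: "nat set set \<Rightarrow> bool" where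
  "free_ultrafilter U \<longleftrightarrow>
     UNIV \<in> U \<and> {} \<notin> U \<and>
     (\<forall>X Y. X \<in> U \<and> X \<subseteq> Y \<longrightarrow> Y \<in> U) \<and>
     (\<forall>X Y. X \<in> U \<and> Y \<in> U \<longrightarrow> X \<inter> Y \<in> U) \<and>
     (\<forall>X. X \<in> U \<or> - X \<in> U) \<and>
     (\<forall>X. finite (- X) \<longrightarrow> X \<in> U)"

text \<open>Order and equality in the ultrapower F^N/U, on representative sequences.
  An element x of F is identified with the class of the constant sequence (\<lambda>_. x).\<close>
definition ustar_less :: "nat set set \<Rightarrow> (nat \<Rightarrow> 'a::linorder) \<Rightarrow> (nat \<Rightarrow> 'a) \<Rightarrow> bool" where
  "ustar_less U v w \<longleftrightarrow> {n. v n < w n} \<in> U"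

definition ustar_eq :: "nat set set \<Rightarrow> (nat \<Rightarrow> 'a) \<Rightarrow> (nat \<Rightarrow> 'a) \<Rightarrow> bool" where
  "ustar_eq U v w \<longleftrightarrow> {n. v n = w n} \<in> U"

end

theory Submission
  imports Defs
begin

text \<open>For every n the sets of indices m with u n < u m, u n = u m and u m < u n
  partition the naturals, so exactly one of them lies in U; hence A, B, C partition the
  naturals, and again exactly one of them lies in U. If, say, A \<in> U, then every n \<in> A is
  followed U-almost everywhere by indices m with u n < u m, and since U contains all
  cofinite sets we can repeatedly pick a later index in A with a larger value. The same
  choice argument with the relations = and > handles B and C.\<close>

lemma free_ultrafilter_Int:
  "free_ultrafilter U \<Longrightarrow> X \<in> U \<Longrightarrow> Y \<in> U \<Longrightarrow> X \<inter> Y \<in> U"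
  unfolding free_ultrafilter_def by blast

lemma free_ultrafilter_nonempty:
  "free_ultrafilter U \<Longrightarrow> X \<in> U \<Longrightarrow> X \<noteq> {}"
  unfolding free_ultrafilter_def by blast

lemma free_ultrafilter_in_or_Compl:
  "free_ultrafilter U \<Longrightarrow> X \<in> U \<or> - X \<in> U"
  unfolding free_ultrafilter_def by blast

lemma free_ultrafilter_greaterThan:
  "free_ultrafilter U \<Longrightarrow> {n<..} \<in> U"
  unfolding free_ultrafilter_def by (simp add: Compl_greaterThan)

lemma free_ultrafilter_partition3:
  assumes U: "free_ultrafilter U"
    and disjoint: "X \<inter> Y = {}" "X \<inter> Z = {}" "Y \<inter> Z = {}"
    and cover: "X \<union> Y \<union> Z = UNIV"
  shows "(X \<in> U \<and> Y \<notin> U \<and> Z \<notin> U) \<or> (Y \<in> U \<and> X \<notin> U \<and> Z \<notin> U)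
    \<or> (Z \<in> U \<and> X \<notin> U \<and> Y \<notin> U)"
proof -
  have not_both: "P \<in> U \<Longrightarrow> Q \<in> U \<Longrightarrow> P \<inter> Q = {} \<Longrightarrow> False" for P Q
    using free_ultrafilter_Int free_ultrafilter_nonempty U by metis
  have "X \<in> U \<or> Y \<in> U \<or> Z \<in> U"
  proof (rule ccontr)
    assume "\<not> ?thesis"
    then have "- X \<inter> - Y \<inter> - Z \<in> U"
      using U free_ultrafilter_in_or_Compl free_ultrafilter_Int by meson
    moreover have "- X \<inter> - Y \<inter> - Z = {}"
      using cover by auto
    ultimately show False
      using U free_ultrafilter_nonempty by blast
  qed
  then show ?thesis
    using not_both disjoint by (metis inf_commute)
qed

lemma free_ultrafilter_chain:
  assumes U: "free_ultrafilter U" and "transp R"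
    and S: "{n. {m. R (u n) (u m)} \<in> U} \<in> U"
  shows "\<exists>r::nat \<Rightarrow> nat. strict_mono r \<and> (\<forall>i j. i < j \<longrightarrow> R (u (r i)) (u (r j)))"
proof -
  let ?S = "{n. {m. R (u n) (u m)} \<in> U}"
  have "\<exists>r. \<forall>i. r i \<in> ?S \<and> r i < r (Suc i) \<and> R (u (r i)) (u (r (Suc i)))"
  proof (rule dependent_nat_choice)
    show "\<exists>n. n \<in> ?S"
      using free_ultrafilter_nonempty[OF U S] by blast
  next
    fix n assume "n \<in> ?S"
    then have "?S \<inter> {m. R (u n) (u m)} \<inter> {n<..} \<in> U"
      using U S free_ultrafilter_Int free_ultrafilter_greaterThan by blast
    then show "\<exists>m. m \<in> ?S \<and> n < m \<and> R (u n) (u m)"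
      using free_ultrafilter_nonempty[OF U] by fastforce
  qed
  then obtain r where r: "\<And>i. r i < r (Suc i)" "\<And>i. R (u (r i)) (u (r (Suc i)))"
    by blast
  have "R (u (r i)) (u (r j))" if "i < j" for i j
    using that by (induction i j rule: less_Suc_induct) (use r(2) \<open>transp R\<close> in \<open>auto elim: transpE\<close>)
  with r(1) show ?thesis
    by (auto simp: strict_mono_Suc_iff)
qed

theorem theorem3p2:
  fixes U :: "nat set set" and u :: "nat \<Rightarrow> 'a::linordered_field"
  assumes "free_ultrafilter U"
  defines "A \<equiv> {n. ustar_less U (\<lambda>_. u n) u}"
      and "B \<equiv> {n. ustar_eq U (\<lambda>_. u n) u}"
      and "C \<equiv> {n. ustar_less U u (\<lambda>_. u n)}"
  shows "A \<inter> B = {} \<and> A \<inter> C = {} \<and> B \<inter> C = {} \<and> A \<union> B \<union> C = UNIV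
    \<and> ((B \<in> U \<and> A \<notin> U \<and> C \<notin> U) \<or> (A \<in> U \<and> B \<notin> U \<and> C \<notin> U)
        \<or> (C \<in> U \<and> A \<notin> U \<and> B \<notin> U))
    \<and> (B \<in> U \<longrightarrow> (\<exists>r::nat \<Rightarrow> nat. strict_mono r \<and> (\<forall>i j. u (r i) = u (r j))))
    \<and> (A \<in> U \<longrightarrow> (\<exists>r::nat \<Rightarrow> nat. strict_mono r \<and> strict_mono (u \<circ> r)))
    \<and> (C \<in> U \<longrightarrow> (\<exists>r::nat \<Rightarrow> nat. strict_mono r \<and> (\<forall>i j. i < j \<longrightarrow> u (r j) < u (r i))))"
proof -
  have A: "A = {n. {m. u n < u m} \<in> U}" and B: "B = {n. {m. u n = u m} \<in> U}"
    and C: "C = {n. {m. u n > u m} \<in> U}"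
    by (auto simp: A_def B_def C_def ustar_less_def ustar_eq_def)
  have "\<And>n. ({m. u n < u m} \<in> U \<and> {m. u n = u m} \<notin> U \<and> {m. u n > u m} \<notin> U)
      \<or> ({m. u n = u m} \<in> U \<and> {m. u n < u m} \<notin> U \<and> {m. u n > u m} \<notin> U)
      \<or> ({m. u n > u m} \<in> U \<and> {m. u n < u m} \<notin> U \<and> {m. u n = u m} \<notin> U)"
    by (rule free_ultrafilter_partition3[OF assms(1)]) auto
  then have partition: "A \<inter> B = {}" "A \<inter> C = {}" "B \<inter> C = {}" "A \<union> B \<union> C = UNIV"
    unfolding A B C by blast+
  have B_chain: "\<exists>r::nat \<Rightarrow> nat. strict_mono r \<and> (\<forall>i j. u (r i) = u (r j))" if B_in: "B \<in> U"
  proof -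
    obtain r :: "nat \<Rightarrow> nat" where "strict_mono r" "\<And>i j. i < j \<Longrightarrow> u (r i) = u (r j)"
      using free_ultrafilter_chain[OF assms(1), of "(=)" u] B_in[unfolded B] by (auto intro: transpI)
    then show ?thesis
      by (metis linorder_neqE_nat)
  qed
  have A_chain: "A \<in> U \<Longrightarrow> \<exists>r::nat \<Rightarrow> nat. strict_mono r \<and> strict_mono (u \<circ> r)"
    using free_ultrafilter_chain[OF assms(1), of "(<)" u] unfolding A strict_mono_def
    by (auto intro: transpI)
  have C_chain: "C \<in> U \<Longrightarrow>
      \<exists>r::nat \<Rightarrow> nat. strict_mono r \<and> (\<forall>i j. i < j \<longrightarrow> u (r j) < u (r i))"
    using free_ultrafilter_chain[OF assms(1), of "(>)" u] unfolding C
    by (auto intro: transpI)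
  have "B \<inter> A = {}" "B \<union> A \<union> C = UNIV"
    using partition by auto
  then have "(B \<in> U \<and> A \<notin> U \<and> C \<notin> U) \<or> (A \<in> U \<and> B \<notin> U \<and> C \<notin> U)
      \<or> (C \<in> U \<and> B \<notin> U \<and> A \<notin> U)"
    using free_ultrafilter_partition3[OF assms(1)] partition(2,3) by blast
  then show ?thesis
    using partition B_chain A_chain C_chain by blast
qed

end
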